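(* Let $\mathcal{H}_A\cong\mathcal{H}_B\cong\mathbb{C}^d$ and let $|\Psi\rangle_{AB}$ be a pure state with Schmidt probabilities $p_1,\dots,p_d$ (i.e. $|\Psi\rangle=\sum_i\sqrt{p_i}|\psi_i\rangle_A|\phi_i\rangle_B$ for orthonormal bases $\{\psi_i\},\{\phi_i\}$), and $\Lambda=\mathrm{diag}(p_1,\dots,p_d)$. Let $t\ge2$, $\pi,\sigma\in S_t$, $\beta=\sigma\pi^{-1}$, and let $\xi_1,\dots,\xi_k$ be the cycle lengths of $\beta$ ($k=\#\mathrm{cycles}(\beta)$). Then $$\mathrm{Tr}[(W^A_\pi\otimes W^B_\sigma)\Psi^{\otimes t}]=\prod_{l=1}^{k}\mathrm{Tr}[\Lambda^{\xi_l}]=:\chi(\Psi,\beta),$$ and moreover $d_0(\Psi)^{k-t}\le\chi(\Psi,\beta)\le d_t(\Psi)^{k-t}$, where $d_\alpha(\Psi)=2^{S_\alpha(\Psi)}$.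
   Context: $\Psi=|\Psi\rangle\langle\Psi|$. $W_\pi$ is the operator permuting the $t$ tensor factors; $(\mathcal{H}_A\otimes\mathcal{H}_B)^{\otimes t}\cong\mathcal{H}_A^{\otimes t}\otimes\mathcal{H}_B^{\otimes t}$. The Rényi entropies of the Schmidt distribution are $S_\alpha(\Psi)=\frac{1}{1-\alpha}\log_2\sum_i p_i^\alpha$ for $\alpha>0$, $\alpha\neq1$, and $S_0(\Psi)=\log_2$ of the Schmidt rank (number of nonzero $p_i$), so $d_0(\Psi)$ is the Schmidt rank. *)

theory Defs
  imports "HOL-Analysis.Analysis" "HOL-Combinatorics.Combinatorics"
begin

text \<open>Computational basis of (C^d)^{\<otimes>t}: extensional functions {0..<t} \<rightarrow> {0..<d}.\<close>
definition idx :: "nat \<Rightarrow> nat \<Rightarrow> (nat \<Rightarrow> nat) set" where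
  "idx t d = PiE {0..<t} (\<lambda>_. {0..<d})"

text \<open>Matrix entry of the permutation operator W_pi on (C^d)^{\<otimes>t}:
  W_pi |i_1 ... i_t> = |i_{pi^-1 1} ... i_{pi^-1 t}>, i.e. <x|W_pi|y> = 1 iff y = x o pi.\<close>
definition perm_op :: "nat \<Rightarrow> (nat \<Rightarrow> nat) \<Rightarrow> (nat \<Rightarrow> nat) \<Rightarrow> (nat \<Rightarrow> nat) \<Rightarrow> complex" where
  "perm_op t \<pi> x y = (if y = restrict (x \<circ> \<pi>) {0..<t} then 1 else 0)"

text \<open>Matrix entry of Psi^{\<otimes>t} (Psi = |psi><psi|, psi with coefficients psi a b in the
  product basis of C^d \<otimes> C^d), using (H_A \<otimes> H_B)^{\<otimes>t} = H_A^{\<otimes>t} \<otimes> H_B^{\<otimes>t}.\<close>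
definition proj_tensor_power ::
  "nat \<Rightarrow> (nat \<Rightarrow> nat \<Rightarrow> complex) \<Rightarrow> (nat \<Rightarrow> nat) \<times> (nat \<Rightarrow> nat) \<Rightarrow> (nat \<Rightarrow> nat) \<times> (nat \<Rightarrow> nat) \<Rightarrow> complex" where
  "proj_tensor_power t \<psi> x y =
     (\<Prod>j<t. \<psi> (fst x j) (snd x j) * cnj (\<psi> (fst y j) (snd y j)))"

text \<open>Tr[(W^A_pi \<otimes> W^B_sigma) Psi^{\<otimes>t}].\<close>
definition trace_perm_proj ::
  "nat \<Rightarrow> nat \<Rightarrow> (nat \<Rightarrow> nat) \<Rightarrow> (nat \<Rightarrow> nat) \<Rightarrow> (nat \<Rightarrow> nat \<Rightarrow> complex) \<Rightarrow> complex" where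
  "trace_perm_proj d t \<pi> \<sigma> \<psi> =
     (\<Sum>x\<in>idx t d \<times> idx t d. \<Sum>y\<in>idx t d \<times> idx t d.
        perm_op t \<pi> (fst x) (fst y) * perm_op t \<sigma> (snd x) (snd y) * proj_tensor_power t \<psi> y x)"

text \<open>The cycles of a permutation beta of {0..<t} (fixed points are cycles of length 1).\<close>
definition perm_cycles :: "nat \<Rightarrow> (nat \<Rightarrow> nat) \<Rightarrow> nat set set" where
  "perm_cycles t \<beta> = (\<lambda>x. orbit \<beta> x) ` {0..<t}"

definition chi :: "nat \<Rightarrow> (nat \<Rightarrow> real) \<Rightarrow> nat \<Rightarrow> (nat \<Rightarrow> nat) \<Rightarrow> real" where
  "chi d p t \<beta> = (\<Prod>c\<in>perm_cycles t \<beta>. \<Sum>i<d. p i ^ card c)"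

definition renyi :: "nat \<Rightarrow> (nat \<Rightarrow> real) \<Rightarrow> real \<Rightarrow> real" where
  "renyi d p \<alpha> = (if \<alpha> = 0 then log 2 (real (card {i\<in>{0..<d}. p i \<noteq> 0}))
                   else (1 / (1 - \<alpha>)) * log 2 (\<Sum>i<d. p i powr \<alpha>))"

definition d_alpha :: "nat \<Rightarrow> (nat \<Rightarrow> real) \<Rightarrow> real \<Rightarrow> real" where
  "d_alpha d p \<alpha> = 2 powr renyi d p \<alpha>"

end

theory Submission
  imports Defs
begin

(* Expanding Psi^{\<otimes>t} in the Schmidt bases, orthonormality of the local bases collapses the
   trace to the sum of p_{k_1} ... p_{k_t} over the index strings k \<in> [d]^t with k \<circ> \<beta> = k.
   These are exactly the strings constant on the cycles of \<beta>, so the sum factorises into the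
   product over the cycles c of Tr[\<Lambda>^|c|] = \<Sum>_i p_i^|c|.
   Jensen's inequality bounds each factor: r^(1-n) \<le> \<Sum>_i p_i^n \<le> (\<Sum>_i p_i^t)^((n-1)/(t-1))
   for 1 \<le> n \<le> t, with r the Schmidt rank. As the cycle lengths add up to t, the exponents
   multiply out to (number of cycles) - t. *)

section \<open>Cycles of a permutation\<close>

context
  fixes \<beta> :: "'a \<Rightarrow> 'a" and S :: "'a set"
  assumes \<beta>_permutes: "\<beta> permutes S" and finite_S: "finite S"
begin

lemma orbit_eq_if_in_orbit: "y \<in> orbit \<beta> x \<Longrightarrow> orbit \<beta> y = orbit \<beta> x"
  by (rule orbit_cyclic_eq3[OF cyclic_on_orbit[OF \<beta>_permutes finite_S]])

lemma self_in_orbit_permutes: "x \<in> orbit \<beta> x"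
  by (rule permutation_self_in_orbit) (use \<beta>_permutes finite_S in \<open>auto simp: permutation_permutes\<close>)

lemma orbit_step_eq: "orbit \<beta> (\<beta> x) = orbit \<beta> x"
  by (rule self_in_orbit_step[OF self_in_orbit_permutes])

lemma Union_orbits: "\<Union>(orbit \<beta> ` S) = S"
  using permutes_orbit_subset[OF \<beta>_permutes] self_in_orbit_permutes by blast

lemma disjoint_orbits: "pairwise disjnt (orbit \<beta> ` S)"
  unfolding pairwise_def disjnt_def using orbit_eq_if_in_orbit by blast

lemma finite_orbit_permutes: "finite (orbit \<beta> x)"
  by (rule finite_orbit[OF self_in_orbit_permutes])

lemma prod_orbits:
  fixes g :: "'a \<Rightarrow> 'b::comm_monoid_mult"
  shows "(\<Prod>c\<in>orbit \<beta> ` S. prod g c) = prod g S"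
  using prod.Union_disjoint[of "orbit \<beta> ` S" g] disjoint_orbits finite_orbit_permutes
  by (simp add: Union_orbits pairwise_def disjnt_def)

lemma sum_card_orbits: "(\<Sum>c\<in>orbit \<beta> ` S. card c) = card S"
proof -
  have "card (\<Union>(orbit \<beta> ` S)) = (\<Sum>c\<in>orbit \<beta> ` S. card c)"
    by (rule card_Union_disjoint[OF disjoint_orbits]) (auto intro: finite_orbit_permutes)
  then show ?thesis by (simp add: Union_orbits)
qed

lemma card_orbit_ge_1: "1 \<le> card (orbit \<beta> x)"
  using finite_orbit_permutes self_in_orbit_permutes
  by (metis One_nat_def Suc_leI card_gt_0_iff empty_iff)

lemma card_orbit_le: "x \<in> S \<Longrightarrow> card (orbit \<beta> x) \<le> card S"
  using permutes_orbit_subset[OF \<beta>_permutes] finite_S by (intro card_mono) auto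

lemma invariant_const_on_orbit:
  assumes "\<forall>x\<in>S. k (\<beta> x) = k x" and "y \<in> orbit \<beta> x"
  shows "k y = k x"
proof -
  have step: "k (\<beta> z) = k z" for z
    using assms(1) permutes_not_in[OF \<beta>_permutes, of z] by (cases "z \<in> S") auto
  from assms(2) show ?thesis
    by induction (simp_all add: step)
qed

lemma image_orbit_eq_singleton:
  assumes "\<forall>x\<in>S. k (\<beta> x) = k x"
  shows "k ` orbit \<beta> x = {k x}"
  using invariant_const_on_orbit[OF assms] self_in_orbit_permutes by blast

lemma prod_comp_orbit:
  fixes g :: "'b \<Rightarrow> 'c::comm_monoid_mult"
  shows "(\<Prod>x\<in>S. g (f (orbit \<beta> x))) = (\<Prod>c\<in>orbit \<beta> ` S. g (f c) ^ card c)"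
proof -
  have "(\<Prod>x\<in>S. g (f (orbit \<beta> x))) = (\<Prod>c\<in>orbit \<beta> ` S. \<Prod>x\<in>c. g (f (orbit \<beta> x)))"
    by (rule prod_orbits[symmetric])
  also have "\<dots> = (\<Prod>c\<in>orbit \<beta> ` S. g (f c) ^ card c)"
  proof (rule prod.cong[OF refl])
    fix c assume "c \<in> orbit \<beta> ` S"
    then obtain x where c: "c = orbit \<beta> x" by blast
    then have "(\<Prod>y\<in>c. g (f (orbit \<beta> y))) = (\<Prod>y\<in>c. g (f c))"
      using orbit_eq_if_in_orbit by simp
    then show "(\<Prod>y\<in>c. g (f (orbit \<beta> y))) = g (f c) ^ card c" by simp
  qed
  finally show ?thesis .
qed

lemma bij_betw_lift_orbits:
  "bij_betw (\<lambda>f. restrict (\<lambda>x. f (orbit \<beta> x)) S) (PiE (orbit \<beta> ` S) (\<lambda>_. A))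
     {k \<in> PiE S (\<lambda>_. A). \<forall>x\<in>S. k (\<beta> x) = k x}"
proof -
  let ?C = "orbit \<beta> ` S"
  let ?K = "{k \<in> PiE S (\<lambda>_. A). \<forall>x\<in>S. k (\<beta> x) = k x}"
  define lift where "lift f = restrict (\<lambda>x. f (orbit \<beta> x)) S" for f :: "'a set \<Rightarrow> 'b"
  define descend where "descend k = restrict (\<lambda>c. the_elem (k ` c)) ?C" for k :: "'a \<Rightarrow> 'b"
  have descend_lift: "descend (lift f) = f" if f: "f \<in> PiE ?C (\<lambda>_. A)" for f
  proof
    fix c show "descend (lift f) c = f c"
    proof (cases "c \<in> ?C")
      case True
      then obtain x where x: "x \<in> S" "c = orbit \<beta> x" by blast
      have "lift f ` c = (\<lambda>_. f c) ` c"
        using permutes_orbit_subset[OF \<beta>_permutes x(1)] orbit_eq_if_in_orbit x(2)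
        by (intro image_cong) (auto simp: lift_def)
      also have "\<dots> = {f c}"
        using self_in_orbit_permutes x(2) by (intro image_constant) simp
      finally show ?thesis using True by (simp add: descend_def)
    next
      case False
      then show ?thesis using PiE_arb[OF f False] by (simp add: descend_def)
    qed
  qed
  have lift_descend: "lift (descend k) = k" if "k \<in> ?K" for k
  proof
    fix x show "lift (descend k) x = k x"
      using that PiE_arb[of k S "\<lambda>_. A" x]
      by (cases "x \<in> S") (auto simp: lift_def descend_def image_orbit_eq_singleton)
  qed
  have "lift ` PiE ?C (\<lambda>_. A) \<subseteq> ?K"
    using permutes_in_image[OF \<beta>_permutes] by (auto simp: lift_def orbit_step_eq)
  moreover have "descend ` ?K \<subseteq> PiE ?C (\<lambda>_. A)"
    by (auto simp: descend_def image_orbit_eq_singleton)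
  ultimately have "bij_betw lift (PiE ?C (\<lambda>_. A)) ?K"
    using descend_lift lift_descend by (intro bij_betw_byWitness[where f' = descend]) auto
  then show ?thesis by (simp add: lift_def[abs_def])
qed

lemma sum_invariant_eq_prod_orbits:
  fixes g :: "'b \<Rightarrow> 'c::comm_semiring_1"
  assumes "finite A"
  shows "(\<Sum>k | k \<in> PiE S (\<lambda>_. A) \<and> (\<forall>x\<in>S. k (\<beta> x) = k x). \<Prod>x\<in>S. g (k x))
    = (\<Prod>c\<in>orbit \<beta> ` S. \<Sum>a\<in>A. g a ^ card c)"
proof -
  have "(\<Prod>c\<in>orbit \<beta> ` S. \<Sum>a\<in>A. g a ^ card c)
      = (\<Sum>f\<in>PiE (orbit \<beta> ` S) (\<lambda>_. A). \<Prod>c\<in>orbit \<beta> ` S. g (f c) ^ card c)"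
    using finite_S assms by (intro prod_sum_PiE) auto
  also have "\<dots> = (\<Sum>f\<in>PiE (orbit \<beta> ` S) (\<lambda>_. A). \<Prod>x\<in>S. g (restrict (\<lambda>x. f (orbit \<beta> x)) S x))"
    by (simp add: prod_comp_orbit)
  also have "\<dots> = (\<Sum>k | k \<in> PiE S (\<lambda>_. A) \<and> (\<forall>x\<in>S. k (\<beta> x) = k x). \<Prod>x\<in>S. g (k x))"
    by (rule sum.reindex_bij_betw[OF bij_betw_lift_orbits])
  finally show ?thesis ..
qed

end

lemma sum_invariant_eq_chi:
  assumes "\<beta> permutes {0..<t}"
  shows "(\<Sum>k | k \<in> PiE {..<t} (\<lambda>_. {..<d}) \<and> (\<forall>j\<in>{..<t}. k (\<beta> j) = k j). \<Prod>j<t. p (k j))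
    = chi d p t \<beta>"
  using sum_invariant_eq_prod_orbits[OF assms finite_atLeastLessThan, of "{..<d}" p]
  by (simp add: chi_def perm_cycles_def atLeast0LessThan)

section \<open>Moment inequalities\<close>

(* Jensen's inequality for x powr a with the uniform weights 1 / card S. *)
lemma card_powr_le_sum_powr:
  fixes p :: "'a \<Rightarrow> real"
  assumes "finite S" "S \<noteq> {}" "\<And>i. i \<in> S \<Longrightarrow> 0 < p i" "sum p S = 1" "1 \<le> a"
  shows "real (card S) powr (1 - a) \<le> (\<Sum>i\<in>S. p i powr a)"
proof -
  define r where "r = real (card S)"
  have r: "r > 0" using assms(1,2) by (simp add: r_def card_gt_0_iff)
  have "(\<Sum>i\<in>S. (1 / r) *\<^sub>R p i) powr a \<le> (\<Sum>i\<in>S. (1 / r) * p i powr a)"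
    using assms r by (intro convex_on_sum[OF assms(1,2) powr_convex]) (auto simp: r_def)
  moreover have "(\<Sum>i\<in>S. (1 / r) *\<^sub>R p i) = 1 / r"
    using assms(4) by (simp add: sum_divide_distrib[symmetric])
  ultimately have "(1 / r) powr a \<le> (1 / r) * (\<Sum>i\<in>S. p i powr a)"
    by (simp add: sum_distrib_left)
  then have "r * (1 / r) powr a \<le> (\<Sum>i\<in>S. p i powr a)"
    using r by (simp add: field_simps)
  moreover have "r * (1 / r) powr a = r powr (1 - a)"
    using r by (simp add: powr_diff powr_divide field_simps)
  ultimately show ?thesis by (simp add: r_def)
qed

(* Jensen's inequality for x powr q, q = (b - 1) / (a - 1), at the points p i powr (a - 1)
   with the weights p i. *)
lemma sum_powr_le_sum_powr_powr:
  fixes p :: "'a \<Rightarrow> real"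
  assumes "finite S" "S \<noteq> {}" "\<And>i. i \<in> S \<Longrightarrow> 0 < p i" "sum p S = 1"
    and "1 < a" "a \<le> b"
  shows "(\<Sum>i\<in>S. p i powr a) \<le> (\<Sum>i\<in>S. p i powr b) powr ((a - 1) / (b - 1))"
proof -
  define q where "q = (b - 1) / (a - 1)"
  have q: "1 \<le> q" using assms(5,6) by (simp add: q_def)
  have "(\<Sum>i\<in>S. p i *\<^sub>R p i powr (a - 1)) powr q \<le> (\<Sum>i\<in>S. p i * (p i powr (a - 1)) powr q)"
    using assms by (intro convex_on_sum[OF assms(1,2) powr_convex[OF q]])
      (auto simp: less_imp_le dest: assms(3))
  moreover have "p i *\<^sub>R p i powr (a - 1) = p i powr a" if "i \<in> S" for i
    using assms(3)[OF that] by (simp add: powr_diff)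
  moreover have "p i * (p i powr (a - 1)) powr q = p i powr b" if "i \<in> S" for i
  proof -
    have "(p i powr (a - 1)) powr q = p i powr (b - 1)"
      using assms(5) by (simp add: powr_powr q_def)
    then show ?thesis
      using assms(3)[OF that] by (simp add: powr_diff)
  qed
  ultimately have jensen: "(\<Sum>i\<in>S. p i powr a) powr q \<le> (\<Sum>i\<in>S. p i powr b)"
    by simp
  have "0 < (\<Sum>i\<in>S. p i powr a)"
    using assms(1,2) by (intro sum_pos) (auto dest: assms(3))
  then have "(\<Sum>i\<in>S. p i powr a) = ((\<Sum>i\<in>S. p i powr a) powr q) powr (1 / q)"
    using q by (simp add: powr_powr)
  also have "\<dots> \<le> (\<Sum>i\<in>S. p i powr b) powr (1 / q)"
    using jensen q by (intro powr_mono2) auto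
  also have "1 / q = (a - 1) / (b - 1)"
    by (simp add: q_def)
  finally show ?thesis .
qed

lemma sum_power_eq_sum_support_powr:
  fixes p :: "'a \<Rightarrow> real"
  assumes "finite S" "\<And>i. i \<in> S \<Longrightarrow> 0 \<le> p i" "1 \<le> n"
  shows "(\<Sum>i\<in>S. p i ^ n) = (\<Sum>i\<in>{i\<in>S. p i \<noteq> 0}. p i powr real n)"
proof -
  have "(\<Sum>i\<in>S. p i ^ n) = (\<Sum>i\<in>{i\<in>S. p i \<noteq> 0}. p i ^ n)"
    using assms(1,3) by (intro sum.mono_neutral_right) auto
  also have "\<dots> = (\<Sum>i\<in>{i\<in>S. p i \<noteq> 0}. p i powr real n)"
  proof (rule sum.cong[OF refl])
    fix i assume "i \<in> {i\<in>S. p i \<noteq> 0}"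
    then have "0 < p i" using assms(2) by (simp add: less_le)
    then show "p i ^ n = p i powr real n" by (simp add: powr_realpow)
  qed
  finally show ?thesis .
qed

lemma
  fixes p :: "'a \<Rightarrow> real"
  assumes "finite S" "\<And>i. i \<in> S \<Longrightarrow> 0 \<le> p i" "sum p S = 1"
  shows support_nonempty: "{i\<in>S. p i \<noteq> 0} \<noteq> {}"
    and sum_support_eq_1: "sum p {i\<in>S. p i \<noteq> 0} = 1"
proof -
  show "sum p {i\<in>S. p i \<noteq> 0} = 1"
    using sum_power_eq_sum_support_powr[OF assms(1,2), where n=1] assms(2,3) by simp
  then show "{i\<in>S. p i \<noteq> 0} \<noteq> {}" by (metis sum.empty zero_neq_one)
qed

lemma sum_power_pos:
  fixes p :: "'a \<Rightarrow> real"
  assumes "finite S" "\<And>i. i \<in> S \<Longrightarrow> 0 \<le> p i" "sum p S = 1"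
  shows "0 < (\<Sum>i\<in>S. p i ^ n)"
proof -
  have "0 < (\<Sum>i\<in>{i\<in>S. p i \<noteq> 0}. p i ^ n)"
  proof (rule sum_pos)
    fix i assume "i \<in> {i\<in>S. p i \<noteq> 0}"
    then have "0 < p i" using assms(2) by (simp add: less_le)
    then show "0 < p i ^ n" by simp
  qed (use assms(1) support_nonempty[OF assms] in auto)
  also have "\<dots> \<le> (\<Sum>i\<in>S. p i ^ n)"
    using assms(1,2) by (intro sum_mono2) auto
  finally show ?thesis .
qed

lemma support_card_powr_le_sum_power:
  fixes p :: "'a \<Rightarrow> real"
  assumes "finite S" "\<And>i. i \<in> S \<Longrightarrow> 0 \<le> p i" "sum p S = 1" "1 \<le> n"
  shows "real (card {i\<in>S. p i \<noteq> 0}) powr (1 - real n) \<le> (\<Sum>i\<in>S. p i ^ n)"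
proof -
  have "real (card {i\<in>S. p i \<noteq> 0}) powr (1 - real n) \<le> (\<Sum>i\<in>{i\<in>S. p i \<noteq> 0}. p i powr real n)"
    using assms(1,2,4) support_nonempty[OF assms(1-3)] sum_support_eq_1[OF assms(1-3)]
    by (intro card_powr_le_sum_powr) (auto simp: less_le)
  then show ?thesis
    using sum_power_eq_sum_support_powr[OF assms(1,2,4)] by simp
qed

lemma sum_power_le_sum_power_powr:
  fixes p :: "'a \<Rightarrow> real"
  assumes "finite S" "\<And>i. i \<in> S \<Longrightarrow> 0 \<le> p i" "sum p S = 1" "1 \<le> n" "n \<le> m"
  shows "(\<Sum>i\<in>S. p i ^ n) \<le> (\<Sum>i\<in>S. p i ^ m) powr ((real n - 1) / (real m - 1))"
proof (cases "n = 1")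
  case True
  then show ?thesis
    using sum_power_pos[OF assms(1-3), of m] assms(3) by simp
next
  case False
  then have "(\<Sum>i\<in>{i\<in>S. p i \<noteq> 0}. p i powr real n)
      \<le> (\<Sum>i\<in>{i\<in>S. p i \<noteq> 0}. p i powr real m) powr ((real n - 1) / (real m - 1))"
    using assms(1,2,4,5) support_nonempty[OF assms(1-3)] sum_support_eq_1[OF assms(1-3)]
    by (intro sum_powr_le_sum_powr_powr) (auto simp: less_le)
  then show ?thesis
    using sum_power_eq_sum_support_powr[OF assms(1,2)] assms(4,5) by simp
qed

lemma d_alpha_zero:
  assumes "\<And>i. i < d \<Longrightarrow> 0 \<le> p i" "(\<Sum>i<d. p i) = 1"
  shows "d_alpha d p 0 = real (card {i\<in>{..<d}. p i \<noteq> 0})"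
proof -
  have "{i\<in>{..<d}. p i \<noteq> 0} \<noteq> {}"
    using assms by (intro support_nonempty) auto
  then have "0 < card {i\<in>{..<d}. p i \<noteq> 0}"
    by (simp add: card_gt_0_iff)
  then show ?thesis
    by (simp add: d_alpha_def renyi_def atLeast0LessThan)
qed

lemma d_alpha_of_nat:
  assumes "\<And>i. i < d \<Longrightarrow> 0 \<le> p i" "(\<Sum>i<d. p i) = 1" "1 \<le> n"
  shows "d_alpha d p (real n) = (\<Sum>i<d. p i ^ n) powr (1 / (1 - real n))"
proof -
  define M where "M = (\<Sum>i<d. p i ^ n)"
  have "0 < M"
    unfolding M_def using assms(1,2) by (intro sum_power_pos) auto
  have "(\<Sum>i<d. p i powr real n) = M"
    unfolding M_def using assms(1,3) by (intro sum.cong refl) (simp add: powr_realpow')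
  then have "d_alpha d p (real n) = 2 powr (log 2 M * (1 / (1 - real n)))"
    using assms(3) by (simp add: d_alpha_def renyi_def mult.commute)
  also have "\<dots> = (2 powr log 2 M) powr (1 / (1 - real n))"
    by (rule powr_powr[symmetric])
  also have "\<dots> = M powr (1 / (1 - real n))"
    using \<open>0 < M\<close> by simp
  finally show ?thesis by (simp add: M_def)
qed

lemma chi_ge_support_card_powr:
  assumes "\<beta> permutes {0..<t}" "\<And>i. i < d \<Longrightarrow> 0 \<le> p i" "(\<Sum>i<d. p i) = 1"
  shows "real (card {i\<in>{..<d}. p i \<noteq> 0}) powr (real (card (perm_cycles t \<beta>)) - real t)
    \<le> chi d p t \<beta>"
proof -
  let ?C = "perm_cycles t \<beta>"
  define r where "r = real (card {i\<in>{..<d}. p i \<noteq> 0})"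
  have C: "?C = orbit \<beta> ` {0..<t}" by (simp add: perm_cycles_def)
  have "0 < r"
    using support_nonempty[of "{..<d}" p] assms(2,3) by (simp add: r_def card_gt_0_iff)
  have "real (card ?C) - real t = (\<Sum>c\<in>?C. 1 - real (card c))"
    using sum_card_orbits[OF assms(1)] by (simp add: C sum_subtractf flip: of_nat_sum)
  then have "r powr (real (card ?C) - real t) = (\<Prod>c\<in>?C. r powr (1 - real (card c)))"
    using \<open>0 < r\<close> by (simp add: powr_sum)
  also have "\<dots> \<le> (\<Prod>c\<in>?C. \<Sum>i<d. p i ^ card c)"
  proof (rule prod_mono)
    fix c assume "c \<in> ?C"
    then have "1 \<le> card c"
      using card_orbit_ge_1[OF assms(1)] by (auto simp: C)
    then show "0 \<le> r powr (1 - real (card c)) \<and> r powr (1 - real (card c)) \<le> (\<Sum>i<d. p i ^ card c)"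
      using support_card_powr_le_sum_power[of "{..<d}" p "card c"] assms(2,3) by (simp add: r_def)
  qed
  finally show ?thesis by (simp add: chi_def r_def)
qed

lemma chi_le_moment_powr:
  assumes "\<beta> permutes {0..<t}" "\<And>i. i < d \<Longrightarrow> 0 \<le> p i" "(\<Sum>i<d. p i) = 1" "2 \<le> t"
  shows "chi d p t \<beta>
    \<le> ((\<Sum>i<d. p i ^ t) powr (1 / (1 - real t))) powr (real (card (perm_cycles t \<beta>)) - real t)"
proof -
  let ?C = "perm_cycles t \<beta>"
  define M where "M = (\<Sum>i<d. p i ^ t)"
  have C: "?C = orbit \<beta> ` {0..<t}" by (simp add: perm_cycles_def)
  have "0 < M"
    unfolding M_def using assms(2,3) by (intro sum_power_pos) auto
  have "1 / (1 - real t) * (real (card ?C) - real t) = (\<Sum>c\<in>?C. (real (card c) - 1) / (real t - 1))"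
  proof -
    have "(\<Sum>c\<in>?C. (real (card c) - 1) / (real t - 1)) = (real t - real (card ?C)) / (real t - 1)"
      using sum_card_orbits[OF assms(1)]
      by (simp add: C sum_subtractf sum_divide_distrib[symmetric] flip: of_nat_sum)
    then show ?thesis
      using assms(4) by (simp add: field_simps)
  qed
  then have "(M powr (1 / (1 - real t))) powr (real (card ?C) - real t)
      = (\<Prod>c\<in>?C. M powr ((real (card c) - 1) / (real t - 1)))"
    using \<open>0 < M\<close> by (simp add: powr_powr powr_sum)
  moreover have "chi d p t \<beta> \<le> (\<Prod>c\<in>?C. M powr ((real (card c) - 1) / (real t - 1)))"
    unfolding chi_def M_def
    using card_orbit_ge_1[OF assms(1)] card_orbit_le[OF assms(1)] assms(2,3)
    by (intro prod_mono) (auto simp: C intro!: sum_power_le_sum_power_powr sum_nonneg)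
  ultimately show ?thesis by (simp add: M_def)
qed

section \<open>The trace formula\<close>

lemma trace_perm_proj_eq_sum:
  assumes "\<pi> permutes {..<t}" and "\<sigma> permutes {..<t}"
  shows "trace_perm_proj d t \<pi> \<sigma> \<psi> = (\<Sum>a\<in>PiE {..<t} (\<lambda>_. {..<d}). \<Sum>b\<in>PiE {..<t} (\<lambda>_. {..<d}).
     \<Prod>j<t. \<psi> (a (\<pi> j)) (b (\<sigma> j)) * cnj (\<psi> (a j) (b j)))"
proof -
  define I where "I = PiE {..<t} (\<lambda>_. {..<d})"
  have "finite I" by (simp add: I_def finite_PiE)
  have inner: "(\<Sum>y\<in>I \<times> I.
        perm_op t \<pi> a (fst y) * perm_op t \<sigma> b (snd y) * proj_tensor_power t \<psi> y (a, b))
     = (\<Prod>j<t. \<psi> (a (\<pi> j)) (b (\<sigma> j)) * cnj (\<psi> (a j) (b j)))" if "a \<in> I" "b \<in> I" for a b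
  proof -
    define y where "y = (restrict (a \<circ> \<pi>) {0..<t}, restrict (b \<circ> \<sigma>) {0..<t})"
    have "y \<in> I \<times> I"
      using that permutes_in_image[OF assms(1)] permutes_in_image[OF assms(2)]
      by (auto simp: y_def I_def PiE_def Pi_def)
    have "(\<Sum>y'\<in>I \<times> I.
          perm_op t \<pi> a (fst y') * perm_op t \<sigma> b (snd y') * proj_tensor_power t \<psi> y' (a, b))
       = (\<Sum>y'\<in>I \<times> I. if y' = y then proj_tensor_power t \<psi> y' (a, b) else 0)"
      by (intro sum.cong refl) (auto simp: perm_op_def y_def)
    also have "\<dots> = proj_tensor_power t \<psi> y (a, b)"
      using \<open>y \<in> I \<times> I\<close> \<open>finite I\<close> by simp
    also have "\<dots> = (\<Prod>j<t. \<psi> (a (\<pi> j)) (b (\<sigma> j)) * cnj (\<psi> (a j) (b j)))"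
      unfolding proj_tensor_power_def by (intro prod.cong refl) (auto simp: y_def)
    finally show ?thesis .
  qed
  have "trace_perm_proj d t \<pi> \<sigma> \<psi>
      = (\<Sum>x\<in>I \<times> I. \<Prod>j<t. \<psi> (fst x (\<pi> j)) (snd x (\<sigma> j)) * cnj (\<psi> (fst x j) (snd x j)))"
    unfolding trace_perm_proj_def idx_def atLeast0LessThan I_def[symmetric]
    by (intro sum.cong refl) (auto simp: inner)
  then show ?thesis
    by (simp add: sum.cartesian_product split_beta I_def)
qed

lemma prod_of_bool:
  assumes "finite S"
  shows "(\<Prod>j\<in>S. of_bool (P j) :: 'a::comm_semiring_1) = of_bool (\<forall>j\<in>S. P j)"
  using assms by (cases "\<forall>j\<in>S. P j") (auto simp: prod_zero)

lemma sum_PiE_prod_orthonormal: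
  fixes u :: "nat \<Rightarrow> nat \<Rightarrow> complex"
  assumes u_on: "\<And>i j. i < d \<Longrightarrow> j < d \<Longrightarrow> (\<Sum>a<d. cnj (u i a) * u j a) = (if i = j then 1 else 0)"
    and "finite S" and \<pi>: "\<pi> permutes S"
    and "i \<in> PiE S (\<lambda>_. {..<d})" and "k \<in> PiE S (\<lambda>_. {..<d})"
  shows "(\<Sum>x\<in>PiE S (\<lambda>_. {..<d}). \<Prod>j\<in>S. u (i j) (x (\<pi> j)) * cnj (u (k j) (x j)))
    = of_bool (\<forall>j\<in>S. k j = i (inv \<pi> j))"
proof -
  have reindex: "(\<Prod>j\<in>S. u (i j) (x (\<pi> j)) * cnj (u (k j) (x j)))
      = (\<Prod>j\<in>S. u (i (inv \<pi> j)) (x j) * cnj (u (k j) (x j)))" for x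
  proof -
    have "(\<Prod>j\<in>S. u (i j) (x (\<pi> j))) = (\<Prod>j\<in>S. u (i (inv \<pi> j)) (x j))"
      using prod.permute[OF permutes_inv[OF \<pi>], of "\<lambda>j. u (i j) (x (\<pi> j))"]
      by (simp add: permutes_inverses(1)[OF \<pi>])
    then show ?thesis by (simp add: prod.distrib)
  qed
  have "(\<Sum>x\<in>PiE S (\<lambda>_. {..<d}). \<Prod>j\<in>S. u (i (inv \<pi> j)) (x j) * cnj (u (k j) (x j)))
      = (\<Prod>j\<in>S. \<Sum>a<d. u (i (inv \<pi> j)) a * cnj (u (k j) a))"
    using \<open>finite S\<close> by (rule prod_sum_PiE[symmetric]) auto
  also have "\<dots> = (\<Prod>j\<in>S. of_bool (k j = i (inv \<pi> j)))"
  proof (rule prod.cong[OF refl])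
    fix j assume "j \<in> S"
    then have "k j < d" "i (inv \<pi> j) < d"
      using assms(4,5) permutes_in_image[OF permutes_inv[OF \<pi>]] by auto
    then show "(\<Sum>a<d. u (i (inv \<pi> j)) a * cnj (u (k j) a)) = of_bool (k j = i (inv \<pi> j))"
      using u_on[of "k j" "i (inv \<pi> j)"] by (simp add: mult.commute)
  qed
  also have "\<dots> = of_bool (\<forall>j\<in>S. k j = i (inv \<pi> j))"
    using \<open>finite S\<close> by (rule prod_of_bool)
  finally show ?thesis by (simp add: reindex)
qed

lemma prod_schmidt_expand:
  fixes p :: "nat \<Rightarrow> real" and u v \<psi> :: "nat \<Rightarrow> nat \<Rightarrow> complex"
  assumes schmidt: "\<And>a b. \<psi> a b = (\<Sum>i<d. complex_of_real (sqrt (p i)) * u i a * v i b)"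
    and "finite S"
  shows "(\<Prod>j\<in>S. \<psi> (a (\<pi> j)) (b (\<sigma> j)) * cnj (\<psi> (a j) (b j)))
    = (\<Sum>i\<in>PiE S (\<lambda>_. {..<d}). \<Sum>k\<in>PiE S (\<lambda>_. {..<d}).
        complex_of_real (\<Prod>j\<in>S. sqrt (p (i j)) * sqrt (p (k j)))
        * (\<Prod>j\<in>S. u (i j) (a (\<pi> j)) * cnj (u (k j) (a j)))
        * (\<Prod>j\<in>S. v (i j) (b (\<sigma> j)) * cnj (v (k j) (b j))))"
proof -
  let ?s = "\<lambda>i. complex_of_real (sqrt (p i))"
  have "(\<Prod>j\<in>S. \<psi> (a (\<pi> j)) (b (\<sigma> j)))
      = (\<Sum>i\<in>PiE S (\<lambda>_. {..<d}). \<Prod>j\<in>S. ?s (i j) * u (i j) (a (\<pi> j)) * v (i j) (b (\<sigma> j)))"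
    unfolding schmidt using \<open>finite S\<close> by (rule prod_sum_PiE) auto
  moreover have "(\<Prod>j\<in>S. cnj (\<psi> (a j) (b j)))
      = (\<Sum>k\<in>PiE S (\<lambda>_. {..<d}). \<Prod>j\<in>S. ?s (k j) * cnj (u (k j) (a j)) * cnj (v (k j) (b j)))"
  proof -
    have "cnj (\<psi> x y) = (\<Sum>i<d. ?s i * cnj (u i x) * cnj (v i y))" for x y
      by (simp add: schmidt)
    then show ?thesis
      using \<open>finite S\<close> by (simp add: prod_sum_PiE)
  qed
  ultimately have "(\<Prod>j\<in>S. \<psi> (a (\<pi> j)) (b (\<sigma> j)) * cnj (\<psi> (a j) (b j)))
      = (\<Sum>i\<in>PiE S (\<lambda>_. {..<d}). \<Sum>k\<in>PiE S (\<lambda>_. {..<d}).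
          (\<Prod>j\<in>S. ?s (i j) * u (i j) (a (\<pi> j)) * v (i j) (b (\<sigma> j)))
          * (\<Prod>j\<in>S. ?s (k j) * cnj (u (k j) (a j)) * cnj (v (k j) (b j))))"
    by (simp add: prod.distrib sum_product)
  also have "\<dots> = (\<Sum>i\<in>PiE S (\<lambda>_. {..<d}). \<Sum>k\<in>PiE S (\<lambda>_. {..<d}).
        complex_of_real (\<Prod>j\<in>S. sqrt (p (i j)) * sqrt (p (k j)))
        * (\<Prod>j\<in>S. u (i j) (a (\<pi> j)) * cnj (u (k j) (a j)))
        * (\<Prod>j\<in>S. v (i j) (b (\<sigma> j)) * cnj (v (k j) (b j))))"
    by (intro sum.cong refl) (simp add: prod.distrib[symmetric] ac_simps)
  finally show ?thesis .
qed

lemma sum_sum_factor: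
  fixes w :: "'i \<Rightarrow> 'k \<Rightarrow> 'c::comm_semiring_0"
  shows "(\<Sum>a\<in>A. \<Sum>b\<in>B. \<Sum>i\<in>C. \<Sum>k\<in>D. w i k * f i k a * g i k b)
      = (\<Sum>i\<in>C. \<Sum>k\<in>D. w i k * (\<Sum>a\<in>A. f i k a) * (\<Sum>b\<in>B. g i k b))"
proof -
  have swap_inner: "(\<Sum>x\<in>X. \<Sum>i\<in>C. \<Sum>k\<in>D. h x i k) = (\<Sum>i\<in>C. \<Sum>k\<in>D. \<Sum>x\<in>X. h x i k)"
    for X h
  proof -
    have "(\<Sum>x\<in>X. \<Sum>i\<in>C. \<Sum>k\<in>D. h x i k) = (\<Sum>i\<in>C. \<Sum>x\<in>X. \<Sum>k\<in>D. h x i k)"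
      by (rule sum.swap)
    also have "\<dots> = (\<Sum>i\<in>C. \<Sum>k\<in>D. \<Sum>x\<in>X. h x i k)"
      by (intro sum.cong refl sum.swap)
    finally show ?thesis .
  qed
  have "(\<Sum>a\<in>A. \<Sum>b\<in>B. \<Sum>i\<in>C. \<Sum>k\<in>D. w i k * f i k a * g i k b)
      = (\<Sum>a\<in>A. \<Sum>i\<in>C. \<Sum>k\<in>D. \<Sum>b\<in>B. w i k * f i k a * g i k b)"
    by (simp only: swap_inner)
  also have "\<dots> = (\<Sum>i\<in>C. \<Sum>k\<in>D. \<Sum>a\<in>A. \<Sum>b\<in>B. w i k * f i k a * g i k b)"
    by (rule swap_inner)
  also have "\<dots> = (\<Sum>i\<in>C. \<Sum>k\<in>D. w i k * (\<Sum>a\<in>A. f i k a) * (\<Sum>b\<in>B. g i k b))"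
  proof (intro sum.cong refl)
    fix i k
    have "w i k * (\<Sum>a\<in>A. f i k a) * (\<Sum>b\<in>B. g i k b) = w i k * (\<Sum>a\<in>A. \<Sum>b\<in>B. f i k a * g i k b)"
      by (simp only: mult.assoc sum_product)
    then show "(\<Sum>a\<in>A. \<Sum>b\<in>B. w i k * f i k a * g i k b) = w i k * (\<Sum>a\<in>A. f i k a) * (\<Sum>b\<in>B. g i k b)"
      by (simp add: sum_distrib_left mult.assoc)
  qed
  finally show ?thesis .
qed

lemma PiE_comp_inv_iff:
  assumes \<pi>: "\<pi> permutes S" and "i \<in> PiE S A"
  shows "(\<forall>j\<in>S. k j = i (inv \<pi> j)) \<longleftrightarrow> i = restrict (k \<circ> \<pi>) S"
proof
  assume k: "\<forall>j\<in>S. k j = i (inv \<pi> j)"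
  show "i = restrict (k \<circ> \<pi>) S"
  proof
    fix j show "i j = restrict (k \<circ> \<pi>) S j"
      using k[rule_format, of "\<pi> j"] permutes_in_image[OF \<pi>] permutes_inverses(2)[OF \<pi>]
        PiE_arb[OF assms(2)] by (cases "j \<in> S") auto
  qed
next
  assume "i = restrict (k \<circ> \<pi>) S"
  then show "\<forall>j\<in>S. k j = i (inv \<pi> j)"
    using permutes_in_image[OF permutes_inv[OF \<pi>]] permutes_inverses(1)[OF \<pi>] by simp
qed

lemma invariant_comp_inv_iff:
  assumes \<pi>: "\<pi> permutes S" and \<sigma>: "\<sigma> permutes S"
  shows "(\<forall>j\<in>S. k j = k (\<pi> (inv \<sigma> j))) \<longleftrightarrow> (\<forall>j\<in>S. k ((\<sigma> \<circ> inv \<pi>) j) = k j)"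
proof safe
  fix j assume k: "\<forall>j\<in>S. k j = k (\<pi> (inv \<sigma> j))" and "j \<in> S"
  then have "k (\<sigma> (inv \<pi> j)) = k (\<pi> (inv \<sigma> (\<sigma> (inv \<pi> j))))"
    using permutes_in_image[OF \<sigma>] permutes_in_image[OF permutes_inv[OF \<pi>]] by blast
  then show "k ((\<sigma> \<circ> inv \<pi>) j) = k j"
    by (simp add: permutes_inverses[OF \<pi>] permutes_inverses[OF \<sigma>])
next
  fix j assume k: "\<forall>j\<in>S. k ((\<sigma> \<circ> inv \<pi>) j) = k j" and "j \<in> S"
  then have "k (\<sigma> (inv \<pi> (\<pi> (inv \<sigma> j)))) = k (\<pi> (inv \<sigma> j))"
    using permutes_in_image[OF \<pi>] permutes_in_image[OF permutes_inv[OF \<sigma>]] by auto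
  then show "k j = k (\<pi> (inv \<sigma> j))"
    by (simp add: permutes_inverses[OF \<pi>] permutes_inverses[OF \<sigma>])
qed

(* The first constraint forces i = k \<circ> \<pi>, which turns the second one into invariance of k
   under \<sigma> \<circ> inv \<pi>. *)
lemma sum_PiE_schmidt_weights_collapse:
  fixes p :: "nat \<Rightarrow> real"
  assumes "finite S" and \<pi>: "\<pi> permutes S" and \<sigma>: "\<sigma> permutes S"
    and k: "k \<in> PiE S (\<lambda>_. {..<d})" and p_nonneg: "\<And>i. i < d \<Longrightarrow> 0 \<le> p i"
  shows "(\<Sum>i\<in>PiE S (\<lambda>_. {..<d}). complex_of_real (\<Prod>j\<in>S. sqrt (p (i j)) * sqrt (p (k j)))
      * of_bool (\<forall>j\<in>S. k j = i (inv \<pi> j)) * of_bool (\<forall>j\<in>S. k j = i (inv \<sigma> j)))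
    = of_bool (\<forall>j\<in>S. k ((\<sigma> \<circ> inv \<pi>) j) = k j) * complex_of_real (\<Prod>j\<in>S. p (k j))"
proof -
  let ?I = "PiE S (\<lambda>_. {..<d})"
  let ?W = "\<lambda>i. complex_of_real (\<Prod>j\<in>S. sqrt (p (i j)) * sqrt (p (k j)))"
  define i\<^sub>0 where "i\<^sub>0 = restrict (k \<circ> \<pi>) S"
  have "i\<^sub>0 \<in> ?I"
    using k permutes_in_image[OF \<pi>] by (auto simp: i\<^sub>0_def)
  have "(\<Sum>i\<in>?I. ?W i * of_bool (\<forall>j\<in>S. k j = i (inv \<pi> j)) * of_bool (\<forall>j\<in>S. k j = i (inv \<sigma> j)))
      = (\<Sum>i\<in>?I. if i = i\<^sub>0 then ?W i * of_bool (\<forall>j\<in>S. k j = i (inv \<sigma> j)) else 0)"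
    by (intro sum.cong refl) (auto simp: PiE_comp_inv_iff[OF \<pi>] i\<^sub>0_def)
  also have "\<dots> = ?W i\<^sub>0 * of_bool (\<forall>j\<in>S. k j = i\<^sub>0 (inv \<sigma> j))"
    using \<open>finite S\<close> \<open>i\<^sub>0 \<in> ?I\<close> by (simp only: sum.delta finite_PiE finite_lessThan if_True)
  also have "?W i\<^sub>0 = complex_of_real (\<Prod>j\<in>S. p (k j))"
  proof -
    have "(\<Prod>j\<in>S. sqrt (p (i\<^sub>0 j)) * sqrt (p (k j)))
        = (\<Prod>j\<in>S. sqrt (p (k (\<pi> j)))) * (\<Prod>j\<in>S. sqrt (p (k j)))"
      by (simp add: i\<^sub>0_def prod.distrib)
    also have "(\<Prod>j\<in>S. sqrt (p (k (\<pi> j)))) = (\<Prod>j\<in>S. sqrt (p (k j)))"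
      using prod.permute[OF \<pi>, of "\<lambda>j. sqrt (p (k j))"] by simp
    also have "(\<Prod>j\<in>S. sqrt (p (k j))) * (\<Prod>j\<in>S. sqrt (p (k j))) = (\<Prod>j\<in>S. p (k j))"
      using k p_nonneg by (simp add: prod.distrib[symmetric] PiE_iff cong: prod.cong)
    finally show ?thesis by simp
  qed
  also have "(\<forall>j\<in>S. k j = i\<^sub>0 (inv \<sigma> j)) \<longleftrightarrow> (\<forall>j\<in>S. k j = k (\<pi> (inv \<sigma> j)))"
    using permutes_in_image[OF permutes_inv[OF \<sigma>]] by (simp add: i\<^sub>0_def)
  also have "\<dots> \<longleftrightarrow> (\<forall>j\<in>S. k ((\<sigma> \<circ> inv \<pi>) j) = k j)"
    by (rule invariant_comp_inv_iff[OF \<pi> \<sigma>])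
  finally show ?thesis by simp
qed

lemma trace_perm_proj_eq_sum_invariant:
  fixes p :: "nat \<Rightarrow> real" and u v \<psi> :: "nat \<Rightarrow> nat \<Rightarrow> complex"
  assumes p_nonneg: "\<And>i. i < d \<Longrightarrow> 0 \<le> p i"
    and u_on: "\<And>i j. i < d \<Longrightarrow> j < d \<Longrightarrow> (\<Sum>a<d. cnj (u i a) * u j a) = (if i = j then 1 else 0)"
    and v_on: "\<And>i j. i < d \<Longrightarrow> j < d \<Longrightarrow> (\<Sum>b<d. cnj (v i b) * v j b) = (if i = j then 1 else 0)"
    and schmidt: "\<And>a b. \<psi> a b = (\<Sum>i<d. complex_of_real (sqrt (p i)) * u i a * v i b)"
    and \<pi>: "\<pi> permutes {..<t}" and \<sigma>: "\<sigma> permutes {..<t}"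
  shows "trace_perm_proj d t \<pi> \<sigma> \<psi> = complex_of_real
    (\<Sum>k | k \<in> PiE {..<t} (\<lambda>_. {..<d}) \<and> (\<forall>j\<in>{..<t}. k ((\<sigma> \<circ> inv \<pi>) j) = k j). \<Prod>j<t. p (k j))"
proof -
  let ?I = "PiE {..<t} (\<lambda>_. {..<d})"
  let ?W = "\<lambda>i k. complex_of_real (\<Prod>j<t. sqrt (p (i j)) * sqrt (p (k j)))"
  let ?U = "\<lambda>i k a. \<Prod>j<t. u (i j) (a (\<pi> j)) * cnj (u (k j) (a j))"
  let ?V = "\<lambda>i k b. \<Prod>j<t. v (i j) (b (\<sigma> j)) * cnj (v (k j) (b j))"
  let ?inv = "\<lambda>k. \<forall>j\<in>{..<t}. k ((\<sigma> \<circ> inv \<pi>) j) = k j"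
  have "trace_perm_proj d t \<pi> \<sigma> \<psi>
      = (\<Sum>a\<in>?I. \<Sum>b\<in>?I. \<Prod>j<t. \<psi> (a (\<pi> j)) (b (\<sigma> j)) * cnj (\<psi> (a j) (b j)))"
    by (rule trace_perm_proj_eq_sum[OF \<pi> \<sigma>])
  also have "\<dots> = (\<Sum>a\<in>?I. \<Sum>b\<in>?I. \<Sum>i\<in>?I. \<Sum>k\<in>?I. ?W i k * ?U i k a * ?V i k b)"
    by (intro sum.cong refl prod_schmidt_expand[OF schmidt finite_lessThan])
  also have "\<dots> = (\<Sum>i\<in>?I. \<Sum>k\<in>?I. ?W i k * (\<Sum>a\<in>?I. ?U i k a) * (\<Sum>b\<in>?I. ?V i k b))"
    by (rule sum_sum_factor)
  also have "\<dots> = (\<Sum>i\<in>?I. \<Sum>k\<in>?I. ?W i k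
      * of_bool (\<forall>j\<in>{..<t}. k j = i (inv \<pi> j)) * of_bool (\<forall>j\<in>{..<t}. k j = i (inv \<sigma> j)))"
    by (intro sum.cong refl)
      (simp add: sum_PiE_prod_orthonormal[OF u_on _ \<pi>] sum_PiE_prod_orthonormal[OF v_on _ \<sigma>])
  also have "\<dots> = (\<Sum>k\<in>?I. \<Sum>i\<in>?I. ?W i k
      * of_bool (\<forall>j\<in>{..<t}. k j = i (inv \<pi> j)) * of_bool (\<forall>j\<in>{..<t}. k j = i (inv \<sigma> j)))"
    by (rule sum.swap)
  also have "\<dots> = (\<Sum>k\<in>?I. of_bool (?inv k) * complex_of_real (\<Prod>j<t. p (k j)))"
    by (intro sum.cong refl sum_PiE_schmidt_weights_collapse[OF _ \<pi> \<sigma> _ p_nonneg]) auto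
  also have "\<dots> = complex_of_real (\<Sum>k | k \<in> ?I \<and> ?inv k. \<Prod>j<t. p (k j))"
    by (simp add: Collect_conj_eq finite_PiE)
  finally show ?thesis .
qed

theorem proposition20:
  fixes d t :: nat and p :: "nat \<Rightarrow> real" and u v :: "nat \<Rightarrow> nat \<Rightarrow> complex"
    and \<psi> :: "nat \<Rightarrow> nat \<Rightarrow> complex" and \<pi> \<sigma> :: "nat \<Rightarrow> nat"
  assumes "d \<ge> 1" and "t \<ge> 2"
    and p_nonneg: "\<And>i. i < d \<Longrightarrow> p i \<ge> 0"
    and p_sum: "(\<Sum>i<d. p i) = 1"
    and u_on: "\<And>i j. i < d \<Longrightarrow> j < d \<Longrightarrow> (\<Sum>a<d. cnj (u i a) * u j a) = (if i = j then 1 else 0)"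
    and v_on: "\<And>i j. i < d \<Longrightarrow> j < d \<Longrightarrow> (\<Sum>b<d. cnj (v i b) * v j b) = (if i = j then 1 else 0)"
    and schmidt: "\<And>a b. \<psi> a b = (\<Sum>i<d. complex_of_real (sqrt (p i)) * u i a * v i b)"
    and "\<pi> permutes {0..<t}" and "\<sigma> permutes {0..<t}"
  shows "trace_perm_proj d t \<pi> \<sigma> \<psi> = complex_of_real (chi d p t (\<sigma> \<circ> inv \<pi>))
    \<and> d_alpha d p 0 powr (real (card (perm_cycles t (\<sigma> \<circ> inv \<pi>))) - real t) \<le> chi d p t (\<sigma> \<circ> inv \<pi>)
    \<and> chi d p t (\<sigma> \<circ> inv \<pi>) \<le> d_alpha d p (real t) powr (real (card (perm_cycles t (\<sigma> \<circ> inv \<pi>))) - real t)"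
proof -
  have \<pi>: "\<pi> permutes {..<t}" and \<sigma>: "\<sigma> permutes {..<t}"
    using assms(8,9) by (simp_all add: atLeast0LessThan)
  have \<beta>: "\<sigma> \<circ> inv \<pi> permutes {0..<t}"
    using assms(8,9) by (intro permutes_compose permutes_inv)
  have "trace_perm_proj d t \<pi> \<sigma> \<psi> = complex_of_real (chi d p t (\<sigma> \<circ> inv \<pi>))"
    by (simp only: trace_perm_proj_eq_sum_invariant[OF p_nonneg u_on v_on schmidt \<pi> \<sigma>]
        sum_invariant_eq_chi[OF \<beta>])
  moreover have "d_alpha d p 0 powr (real (card (perm_cycles t (\<sigma> \<circ> inv \<pi>))) - real t)
      \<le> chi d p t (\<sigma> \<circ> inv \<pi>)"
    using chi_ge_support_card_powr[OF \<beta> p_nonneg p_sum]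
    by (simp add: d_alpha_zero[OF p_nonneg p_sum])
  moreover have "chi d p t (\<sigma> \<circ> inv \<pi>)
      \<le> d_alpha d p (real t) powr (real (card (perm_cycles t (\<sigma> \<circ> inv \<pi>))) - real t)"
    using chi_le_moment_powr[OF \<beta> p_nonneg p_sum \<open>t \<ge> 2\<close>] \<open>t \<ge> 2\<close>
    by (simp add: d_alpha_of_nat[OF p_nonneg p_sum])
  ultimately show ?thesis by blast
qed

end
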